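(* The minus operator $-$ of the W3C SPARQL algebra is expressible in the core SPARQL algebra. That is, for all multisets of mappings $\Omega_1,\Omega_2$, the multiset $\Omega_1-\Omega_2$ (with its multiplicities) can be obtained by an expression using only projection, selection, join, union and simple difference.
   Context: Fix pairwise disjoint infinite sets $I$ (IRIs), $L$ (literals) and $V$ (variables), and let $T=I\cup L$. Solution mappings. A mapping is a partial function $\mu:V\to T$ with domain $\operatorname{dom}(\mu)$. Mappings $\mu_1,\mu_2$ are compatible ($\mu_1\sim\mu_2$) if they agree on every variable in $\operatorname{dom}(\mu_1)\cap\operatorname{dom}(\mu_2)$; then $\mu_1\cup\mu_2$ is a mapping. Multisets. A multiset $\Omega$ of mappings assigns multiplicities $\mathrm{card}_\Omega(\mu)\ge0$, and $\operatorname{dom}(\Omega)=\bigcup_{\mu\in\Omega}\operatorname{dom}(\mu)$. Selection formulas. The atomic ones are $(?X=c)$, $(?X=?Y)$ and $\operatorname{bound}(?X)$; they are closed under $\land$, $\lor$ and $\neg$. They are evaluated under a mapping in the three-valued logic $\{\mathit{true},\mathit{false},\mathit{error}\}$: - an equality is $\mathit{error}$ if a mentioned variable is unbound, and otherwise $\mathit{true}$ or $\mathit{false}$ according to equality; - $\operatorname{bound}(?X)$ is $\mathit{true}$ iff $?X$ is bound, and $\mathit{false}$ otherwise; - $\land$ and $\lor$ follow Kleene's strong three-valued logic with $\mathit{error}$ as the unknown value, and $\neg(\mathit{error})=\mathit{error}$. Operations, for multisets $\Omega_1,\Omega_2$. - Projection: $\pi_W$ restricts each mapping to $W$ and sums multiplicities.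 - Selection: $\sigma_F$ keeps the mappings on which $F$ evaluates to $\mathit{true}$. - Join: $\Omega_1\Join\Omega_2$ consists of the unions $\mu_1\cup\mu_2$ of compatible pairs, with multiplicities being sums of products. - Union: $\Omega_1\cup\Omega_2$, with multiplicities added. - Simple difference: $\Omega_1\setminus\Omega_2=\{\mu_1\in\Omega_1\mid\forall\mu_2\in\Omega_2,\ \mu_1\nsim\mu_2\}$, with multiplicities as in $\Omega_1$. - Minus: $\Omega_1-\Omega_2=\{\mu_1\in\Omega_1\mid\forall\mu_2\in\Omega_2,\ \mu_1\nsim\mu_2\lor\operatorname{dom}(\mu_1)\cap\operatorname{dom}(\mu_2)=\emptyset\}$, with multiplicities as in $\Omega_1$. The core SPARQL algebra consists of projection, selection, join, union and simple difference. An operator $O$ is expressible in a language $L$ iff some subset of the operators of $L$ can express the same queries as $O$. *)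

theory Defs
  imports Main "HOL-Library.Multiset"
begin

text \<open>Solution mappings: partial functions from variables 'v to RDF terms 't
  (the set T = I \<union> L of IRIs and literals is modelled by the type 't).\<close>
type_synonym ('v, 't) smap = "'v \<Rightarrow> 't option"

definition compatible :: "('v, 't) smap \<Rightarrow> ('v, 't) smap \<Rightarrow> bool" where
  "compatible m1 m2 \<longleftrightarrow> (\<forall>x \<in> dom m1 \<inter> dom m2. m1 x = m2 x)"

definition mdom :: "('v, 't) smap multiset \<Rightarrow> 'v set" where
  "mdom \<Omega> = (\<Union>m \<in> set_mset \<Omega>. dom m)"

datatype ('v, 't) sformula =
    EqC 'v 't
  | EqV 'v 'v
  | Bnd 'v
  | Conj "('v, 't) sformula" "('v, 't) sformula"
  | Disj "('v, 't) sformula" "('v, 't) sformula"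
  | Neg "('v, 't) sformula"

datatype tval = TT | FF | Err

fun tand :: "tval \<Rightarrow> tval \<Rightarrow> tval" where
  "tand FF _ = FF"
| "tand _ FF = FF"
| "tand TT TT = TT"
| "tand _ _ = Err"

fun tor :: "tval \<Rightarrow> tval \<Rightarrow> tval" where
  "tor TT _ = TT"
| "tor _ TT = TT"
| "tor FF FF = FF"
| "tor _ _ = Err"

fun tneg :: "tval \<Rightarrow> tval" where
  "tneg TT = FF"
| "tneg FF = TT"
| "tneg Err = Err"

fun feval :: "('v, 't) smap \<Rightarrow> ('v, 't) sformula \<Rightarrow> tval" where
  "feval m (EqC x c) = (case m x of None \<Rightarrow> Err | Some a \<Rightarrow> (if a = c then TT else FF))"
| "feval m (EqV x y) = (case (m x, m y) of (Some a, Some b) \<Rightarrow> (if a = b then TT else FF) | _ \<Rightarrow> Err)"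
| "feval m (Bnd x) = (if x \<in> dom m then TT else FF)"
| "feval m (Conj f g) = tand (feval m f) (feval m g)"
| "feval m (Disj f g) = tor (feval m f) (feval m g)"
| "feval m (Neg f) = tneg (feval m f)"

definition proj :: "'v set \<Rightarrow> ('v, 't) smap multiset \<Rightarrow> ('v, 't) smap multiset" where
  "proj W \<Omega> = image_mset (\<lambda>m. m |` W) \<Omega>"

definition sel :: "('v, 't) sformula \<Rightarrow> ('v, 't) smap multiset \<Rightarrow> ('v, 't) smap multiset" where
  "sel F \<Omega> = filter_mset (\<lambda>m. feval m F = TT) \<Omega>"

definition mjoin :: "('v, 't) smap multiset \<Rightarrow> ('v, 't) smap multiset \<Rightarrow> ('v, 't) smap multiset" where
  "mjoin \<Omega>1 \<Omega>2 = image_mset (\<lambda>(m1, m2). m1 ++ m2)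
      (filter_mset (\<lambda>(m1, m2). compatible m1 m2)
        (\<Sum>m1\<in>#\<Omega>1. image_mset (\<lambda>m2. (m1, m2)) \<Omega>2))"

definition munion :: "('v, 't) smap multiset \<Rightarrow> ('v, 't) smap multiset \<Rightarrow> ('v, 't) smap multiset" where
  "munion \<Omega>1 \<Omega>2 = \<Omega>1 + \<Omega>2"

definition sdiff :: "('v, 't) smap multiset \<Rightarrow> ('v, 't) smap multiset \<Rightarrow> ('v, 't) smap multiset" where
  "sdiff \<Omega>1 \<Omega>2 = filter_mset (\<lambda>m1. \<forall>m2 \<in># \<Omega>2. \<not> compatible m1 m2) \<Omega>1"

definition sminus :: "('v, 't) smap multiset \<Rightarrow> ('v, 't) smap multiset \<Rightarrow> ('v, 't) smap multiset" where
  "sminus \<Omega>1 \<Omega>2 = filter_mset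
     (\<lambda>m1. \<forall>m2 \<in># \<Omega>2. \<not> compatible m1 m2 \<or> dom m1 \<inter> dom m2 = {}) \<Omega>1"

datatype ('v, 't) cexpr =
    In1
  | In2
  | Proj "'v set" "('v, 't) cexpr"
  | Sel "('v, 't) sformula" "('v, 't) cexpr"
  | Join "('v, 't) cexpr" "('v, 't) cexpr"
  | Union "('v, 't) cexpr" "('v, 't) cexpr"
  | Diff "('v, 't) cexpr" "('v, 't) cexpr"

fun ceval :: "('v, 't) cexpr \<Rightarrow> ('v, 't) smap multiset \<Rightarrow> ('v, 't) smap multiset
              \<Rightarrow> ('v, 't) smap multiset" where
  "ceval In1 \<Omega>1 \<Omega>2 = \<Omega>1"
| "ceval In2 \<Omega>1 \<Omega>2 = \<Omega>2"
| "ceval (Proj W e) \<Omega>1 \<Omega>2 = proj W (ceval e \<Omega>1 \<Omega>2)"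
| "ceval (Sel F e) \<Omega>1 \<Omega>2 = sel F (ceval e \<Omega>1 \<Omega>2)"
| "ceval (Join e f) \<Omega>1 \<Omega>2 = mjoin (ceval e \<Omega>1 \<Omega>2) (ceval f \<Omega>1 \<Omega>2)"
| "ceval (Union e f) \<Omega>1 \<Omega>2 = munion (ceval e \<Omega>1 \<Omega>2) (ceval f \<Omega>1 \<Omega>2)"
| "ceval (Diff e f) \<Omega>1 \<Omega>2 = sdiff (ceval e \<Omega>1 \<Omega>2) (ceval f \<Omega>1 \<Omega>2)"

end

theory Submission
  imports Defs
begin

text \<open>All mappings have their domain inside the finite set X, so there are only finitely many
  domains D \<subseteq> X, and "dom \<mu> = D" is expressible by a selection formula built from bound.
  For \<mu>1 with domain D the minus condition only involves the mappings \<mu>2 whose domain meets D,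
  and for those it is exactly the condition of simple difference. Hence
  \<Omega>1 - \<Omega>2 is the union over D \<subseteq> X of
  \<sigma>[dom = D](\<Omega>1) \<setminus> (\<Union>{\<sigma>[dom = S](\<Omega>2) | S \<subseteq> X, S \<inter> D \<noteq> {}}).\<close>

lemma sum_filter_mset_partition:
  assumes "finite A" and "\<forall>x \<in># M. f x \<in> A"
  shows "(\<Sum>a\<in>A. filter_mset (\<lambda>x. f x = a) M) = M"
proof (rule multiset_eqI)
  fix x
  have "count (\<Sum>a\<in>A. filter_mset (\<lambda>x. f x = a) M) x = (\<Sum>a\<in>A. if f x = a then count M x else 0)"
    by (simp add: count_sum)
  also have "\<dots> = (if f x \<in> A then count M x else 0)"
    using assms(1) by (simp add: sum.delta)
  also have "\<dots> = count M x"
    using assms(2) by (auto simp: count_eq_zero_iff)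
  finally show "count (\<Sum>a\<in>A. filter_mset (\<lambda>x. f x = a) M) x = count M x" .
qed

lemma sminus_eq_sum_sdiff_by_dom:
  assumes "finite X" and "mdom \<Omega>1 \<subseteq> X"
  shows "sminus \<Omega>1 \<Omega>2 =
    (\<Sum>D\<in>Pow X. sdiff (filter_mset (\<lambda>m. dom m = D) \<Omega>1) (filter_mset (\<lambda>m. dom m \<inter> D \<noteq> {}) \<Omega>2))"
proof -
  have "sminus \<Omega>1 \<Omega>2 = (\<Sum>D\<in>Pow X. filter_mset (\<lambda>m. dom m = D) (sminus \<Omega>1 \<Omega>2))"
    using assms by (intro sum_filter_mset_partition[symmetric]) (auto simp: sminus_def mdom_def)
  also have "\<dots> = (\<Sum>D\<in>Pow X.
      sdiff (filter_mset (\<lambda>m. dom m = D) \<Omega>1) (filter_mset (\<lambda>m. dom m \<inter> D \<noteq> {}) \<Omega>2))"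
    unfolding sminus_def sdiff_def filter_filter_mset
    by (intro sum.cong refl filter_mset_cong) (auto simp: Int_commute)
  finally show ?thesis .
qed

fun dom_formula :: "'v list \<Rightarrow> 'v set \<Rightarrow> ('v, 't) sformula" where
  "dom_formula [] D = Disj (Bnd undefined) (Neg (Bnd undefined))" \<comment> \<open>a tautology; any variable will do\<close>
| "dom_formula (x # xs) D = Conj (if x \<in> D then Bnd x else Neg (Bnd x)) (dom_formula xs D)"

lemma feval_dom_formula:
  "feval m (dom_formula xs D) = (if \<forall>x\<in>set xs. x \<in> dom m \<longleftrightarrow> x \<in> D then TT else FF)"
  by (induction xs) auto

lemma sel_dom_formula:
  assumes "mdom M \<subseteq> set xs" and "D \<subseteq> set xs"
  shows "sel (dom_formula xs D) M = filter_mset (\<lambda>m. dom m = D) M"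
  unfolding sel_def feval_dom_formula
  using assms by (intro filter_mset_cong) (auto simp: mdom_def)

fun union_all :: "('v, 't) cexpr list \<Rightarrow> ('v, 't) cexpr" where
  "union_all [] = Diff In1 In1"
| "union_all (e # es) = Union e (union_all es)"

lemma sdiff_self: "sdiff M M = {#}"
  unfolding sdiff_def compatible_def by (auto simp: filter_mset_eq_conv)

lemma ceval_union_all: "ceval (union_all es) \<Omega>1 \<Omega>2 = (\<Sum>e\<leftarrow>es. ceval e \<Omega>1 \<Omega>2)"
  by (induction es) (auto simp: sdiff_self munion_def)

lemma ceval_union_all_distinct:
  "distinct xs \<Longrightarrow> ceval (union_all (map f xs)) \<Omega>1 \<Omega>2 = (\<Sum>x\<in>set xs. ceval (f x) \<Omega>1 \<Omega>2)"
  by (simp add: ceval_union_all sum_list_distinct_conv_sum_set)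

text \<open>The expression of the header, for X = set xs and Ds enumerating the subsets of X.\<close>
definition minus_expr :: "'v list \<Rightarrow> 'v set list \<Rightarrow> ('v, 't) cexpr" where
  "minus_expr xs Ds = union_all (map (\<lambda>D.
     Diff (Sel (dom_formula xs D) In1)
          (union_all (map (\<lambda>S. Sel (dom_formula xs S) In2) (filter (\<lambda>S. S \<inter> D \<noteq> {}) Ds)))) Ds)"

lemma ceval_minus_expr:
  assumes Ds: "set Ds = Pow (set xs)" "distinct Ds"
    and dom1: "mdom \<Omega>1 \<subseteq> set xs" and dom2: "mdom \<Omega>2 \<subseteq> set xs"
  shows "ceval (minus_expr xs Ds) \<Omega>1 \<Omega>2 = sminus \<Omega>1 \<Omega>2"
proof -
  have meeting: "(\<Sum>S\<in>{S \<in> Pow (set xs). S \<inter> D \<noteq> {}}. filter_mset (\<lambda>m. dom m = S) \<Omega>2)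
      = filter_mset (\<lambda>m. dom m \<inter> D \<noteq> {}) \<Omega>2" for D
  proof -
    have "filter_mset (\<lambda>m. dom m = S) \<Omega>2
        = filter_mset (\<lambda>m. dom m = S) (filter_mset (\<lambda>m. dom m \<inter> D \<noteq> {}) \<Omega>2)"
      if "S \<inter> D \<noteq> {}" for S
      using that by (auto simp: filter_filter_mset intro: filter_mset_cong)
    then have "(\<Sum>S\<in>{S \<in> Pow (set xs). S \<inter> D \<noteq> {}}. filter_mset (\<lambda>m. dom m = S) \<Omega>2)
        = (\<Sum>S\<in>{S \<in> Pow (set xs). S \<inter> D \<noteq> {}}.
             filter_mset (\<lambda>m. dom m = S) (filter_mset (\<lambda>m. dom m \<inter> D \<noteq> {}) \<Omega>2))"
      by (intro sum.cong) auto
    also have "\<dots> = filter_mset (\<lambda>m. dom m \<inter> D \<noteq> {}) \<Omega>2"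
      using dom2 by (intro sum_filter_mset_partition) (auto simp: mdom_def)
    finally show ?thesis .
  qed
  have "ceval (minus_expr xs Ds) \<Omega>1 \<Omega>2 = (\<Sum>D\<in>Pow (set xs).
      sdiff (filter_mset (\<lambda>m. dom m = D) \<Omega>1) (filter_mset (\<lambda>m. dom m \<inter> D \<noteq> {}) \<Omega>2))"
    unfolding minus_expr_def using Ds
    by (auto simp: ceval_union_all_distinct sel_dom_formula dom1 dom2 meeting[symmetric]
        intro!: sum.cong)
  also have "\<dots> = sminus \<Omega>1 \<Omega>2"
    using dom1 by (simp add: sminus_eq_sum_sdiff_by_dom[of "set xs"])
  finally show ?thesis .
qed

theorem lemma3:
  assumes "infinite (UNIV :: 'v set)" and "infinite (UNIV :: 't set)"
  shows "\<forall>X :: 'v set. finite X \<longrightarrow>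
           (\<exists>e :: ('v, 't) cexpr. \<forall>\<Omega>1 \<Omega>2.
              mdom \<Omega>1 \<subseteq> X \<and> mdom \<Omega>2 \<subseteq> X \<longrightarrow> ceval e \<Omega>1 \<Omega>2 = sminus \<Omega>1 \<Omega>2)"
proof (intro allI impI)
  fix X :: "'v set"
  assume "finite X"
  then obtain xs where xs: "set xs = X"
    using finite_list by blast
  obtain Ds where "set Ds = Pow X" "distinct Ds"
    using finite_distinct_list[of "Pow X"] \<open>finite X\<close> by auto
  then show "\<exists>e :: ('v, 't) cexpr. \<forall>\<Omega>1 \<Omega>2.
      mdom \<Omega>1 \<subseteq> X \<and> mdom \<Omega>2 \<subseteq> X \<longrightarrow> ceval e \<Omega>1 \<Omega>2 = sminus \<Omega>1 \<Omega>2"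
    using ceval_minus_expr[of Ds xs] xs by blast
qed

end
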